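(* Let $G$ be a connected diamond-free graph. Then $G$ is CIS if and only if one of the following holds: (i) $G$ is clique simplicial; (ii) $G\cong K_{m,n}$ for some integers $m,n\ge 2$; (iii) $G\cong L(K_{n,n})$ for some integer $n\ge 3$.
   Context: All graphs are finite, simple and undirected. A clique is a set of pairwise adjacent vertices, a stable set a set of pairwise non-adjacent vertices; "maximal" means inclusion-maximal. A clique is strong if it intersects every maximal stable set. A graph is CIS if every maximal clique is strong (equivalently, every maximal clique intersects every maximal stable set). The diamond is $K_4$ minus one edge; a graph is diamond-free if it has no induced subgraph isomorphic to the diamond. A vertex $v$ is simplicial if its closed neighborhood $N[v]=N(v)\cup\{v\}$ is a clique; a clique is simplicial if it equals $N[v]$ for some simplicial vertex $v$ (such a clique is maximal). A graph is clique simplicial if every maximal clique is simplicial. $K_{m,n}$ is the complete bipartite graph with parts of sizes $m,n$; $L(H)$ denotes the line graph of $H$. *)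

theory Defs
  imports Main
begin

definition graph :: "'a set \<Rightarrow> ('a \<Rightarrow> 'a \<Rightarrow> bool) \<Rightarrow> bool" where
  "graph V E \<longleftrightarrow> finite V \<and> (\<forall>x y. E x y \<longrightarrow> x \<in> V \<and> y \<in> V)
     \<and> (\<forall>x y. E x y \<longrightarrow> E y x) \<and> (\<forall>x. \<not> E x x)"

definition connected_graph :: "'a set \<Rightarrow> ('a \<Rightarrow> 'a \<Rightarrow> bool) \<Rightarrow> bool" where
  "connected_graph V E \<longleftrightarrow> V \<noteq> {} \<and> (\<forall>x\<in>V. \<forall>y\<in>V. E\<^sup>*\<^sup>* x y)"

definition clique :: "'a set \<Rightarrow> ('a \<Rightarrow> 'a \<Rightarrow> bool) \<Rightarrow> 'a set \<Rightarrow> bool" where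
  "clique V E K \<longleftrightarrow> K \<subseteq> V \<and> (\<forall>x\<in>K. \<forall>y\<in>K. x \<noteq> y \<longrightarrow> E x y)"

definition stable :: "'a set \<Rightarrow> ('a \<Rightarrow> 'a \<Rightarrow> bool) \<Rightarrow> 'a set \<Rightarrow> bool" where
  "stable V E S \<longleftrightarrow> S \<subseteq> V \<and> (\<forall>x\<in>S. \<forall>y\<in>S. \<not> E x y)"

definition maximal_clique :: "'a set \<Rightarrow> ('a \<Rightarrow> 'a \<Rightarrow> bool) \<Rightarrow> 'a set \<Rightarrow> bool" where
  "maximal_clique V E K \<longleftrightarrow> clique V E K \<and> (\<forall>K'. clique V E K' \<and> K \<subseteq> K' \<longrightarrow> K' = K)"

definition maximal_stable :: "'a set \<Rightarrow> ('a \<Rightarrow> 'a \<Rightarrow> bool) \<Rightarrow> 'a set \<Rightarrow> bool" where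
  "maximal_stable V E S \<longleftrightarrow> stable V E S \<and> (\<forall>S'. stable V E S' \<and> S \<subseteq> S' \<longrightarrow> S' = S)"

definition strong_clique :: "'a set \<Rightarrow> ('a \<Rightarrow> 'a \<Rightarrow> bool) \<Rightarrow> 'a set \<Rightarrow> bool" where
  "strong_clique V E K \<longleftrightarrow> clique V E K \<and> (\<forall>S. maximal_stable V E S \<longrightarrow> K \<inter> S \<noteq> {})"

definition CIS :: "'a set \<Rightarrow> ('a \<Rightarrow> 'a \<Rightarrow> bool) \<Rightarrow> bool" where
  "CIS V E \<longleftrightarrow> (\<forall>K. maximal_clique V E K \<longrightarrow> strong_clique V E K)"

definition diamond_free :: "'a set \<Rightarrow> ('a \<Rightarrow> 'a \<Rightarrow> bool) \<Rightarrow> bool" where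
  "diamond_free V E \<longleftrightarrow> \<not> (\<exists>a\<in>V. \<exists>b\<in>V. \<exists>c\<in>V. \<exists>d\<in>V. distinct [a, b, c, d] \<and>
      E a b \<and> E a c \<and> E a d \<and> E b c \<and> E b d \<and> \<not> E c d)"

definition closed_nbhd :: "'a set \<Rightarrow> ('a \<Rightarrow> 'a \<Rightarrow> bool) \<Rightarrow> 'a \<Rightarrow> 'a set" where
  "closed_nbhd V E v = {u \<in> V. E v u} \<union> {v}"

definition simplicial_vertex :: "'a set \<Rightarrow> ('a \<Rightarrow> 'a \<Rightarrow> bool) \<Rightarrow> 'a \<Rightarrow> bool" where
  "simplicial_vertex V E v \<longleftrightarrow> v \<in> V \<and> clique V E (closed_nbhd V E v)"

definition simplicial_clique :: "'a set \<Rightarrow> ('a \<Rightarrow> 'a \<Rightarrow> bool) \<Rightarrow> 'a set \<Rightarrow> bool" where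
  "simplicial_clique V E K \<longleftrightarrow> (\<exists>v. simplicial_vertex V E v \<and> K = closed_nbhd V E v)"

definition clique_simplicial :: "'a set \<Rightarrow> ('a \<Rightarrow> 'a \<Rightarrow> bool) \<Rightarrow> bool" where
  "clique_simplicial V E \<longleftrightarrow> (\<forall>K. maximal_clique V E K \<longrightarrow> simplicial_clique V E K)"

definition graph_iso :: "'a set \<Rightarrow> ('a \<Rightarrow> 'a \<Rightarrow> bool) \<Rightarrow> 'b set \<Rightarrow> ('b \<Rightarrow> 'b \<Rightarrow> bool) \<Rightarrow> bool" where
  "graph_iso V E V' E' \<longleftrightarrow> (\<exists>f. bij_betw f V V' \<and> (\<forall>x\<in>V. \<forall>y\<in>V. E x y \<longleftrightarrow> E' (f x) (f y)))"

definition Kmn_V :: "nat \<Rightarrow> nat \<Rightarrow> (nat + nat) set" where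
  "Kmn_V m n = Inl ` {..<m} \<union> Inr ` {..<n}"

definition Kmn_E :: "nat \<Rightarrow> nat \<Rightarrow> (nat + nat) \<Rightarrow> (nat + nat) \<Rightarrow> bool" where
  "Kmn_E m n x y \<longleftrightarrow> x \<in> Kmn_V m n \<and> y \<in> Kmn_V m n \<and>
     ((\<exists>i j. x = Inl i \<and> y = Inr j) \<or> (\<exists>i j. x = Inr j \<and> y = Inl i))"

definition line_V :: "'a set \<Rightarrow> ('a \<Rightarrow> 'a \<Rightarrow> bool) \<Rightarrow> 'a set set" where
  "line_V V E = {{x, y} | x y. x \<in> V \<and> y \<in> V \<and> E x y}"

definition line_E :: "'a set \<Rightarrow> ('a \<Rightarrow> 'a \<Rightarrow> bool) \<Rightarrow> 'a set \<Rightarrow> 'a set \<Rightarrow> bool" where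
  "line_E V E e f \<longleftrightarrow> e \<in> line_V V E \<and> f \<in> line_V V E \<and> e \<noteq> f \<and> e \<inter> f \<noteq> {}"

end

theory Submission
  imports Defs
begin

text \<open>
  Clique-simplicial graphs, complete multipartite graphs and rook graphs L(K_{n,n}) are CIS
  by direct arguments. Conversely, let G be connected, diamond-free and CIS. Diamond-freeness
  means that a vertex outside a maximal clique has at most one neighbour in it, and CIS means
  that no stable set dominates a maximal clique. A maximal clique without simplicial vertices
  passes this property on to every maximal clique meeting it, so if G is not clique simplicial
  no vertex is simplicial. If then some maximal clique is an edge xy, the neighbourhoods of x
  and y form a complete bipartition of G. Otherwise a smallest maximal clique L has k \<ge> 3
  vertices; growing stable sets one vertex at a time shows that every vertex of L lies in exactly
  one further maximal clique, again of size k, and that every vertex of G is equal or adjacent to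
  exactly one vertex of L. Fixing p in L and the other maximal clique Y through p, a vertex is
  determined by these anchors in L and in Y, and two vertices are adjacent iff they share an
  anchor, so G is L(K_{k,k}).
\<close>

section \<open>Cliques and stable sets in simple graphs\<close>

lemma ex_maximal_superset:
  assumes "finite V" and "\<And>K. P K \<Longrightarrow> K \<subseteq> V" and "P C"
  shows "\<exists>K. P K \<and> C \<subseteq> K \<and> (\<forall>K'. P K' \<and> K \<subseteq> K' \<longrightarrow> K' = K)"
proof -
  have "{K. P K} \<subseteq> Pow V"
    using assms(2) by blast
  then have "finite {K. P K}"
    using assms(1) finite_subset by blast
  then show ?thesis
    using finite_has_maximal2[of "{K. P K}" C] assms(3) by auto
qed

locale simple_graph =
  fixes V :: "'a set" and E :: "'a \<Rightarrow> 'a \<Rightarrow> bool"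
  assumes graph: "graph V E"
begin

lemma finite_V: "finite V"
  using graph by (simp add: graph_def)

lemma adj_sym: "E x y \<Longrightarrow> E y x"
  using graph by (simp add: graph_def)

lemma adj_irrefl: "\<not> E x x"
  using graph by (simp add: graph_def)

lemma adj_in_V1: "E x y \<Longrightarrow> x \<in> V"
  using graph by (simp add: graph_def)

lemma adj_in_V2: "E x y \<Longrightarrow> y \<in> V"
  using graph by (simp add: graph_def)

lemma adj_neq: "E x y \<Longrightarrow> x \<noteq> y"
  using adj_irrefl by auto

lemma clique_edge: "E a b \<Longrightarrow> clique V E {a, b}"
  using adj_in_V1 adj_in_V2 by (auto simp: clique_def dest: adj_sym)

lemma clique_singleton: "a \<in> V \<Longrightarrow> clique V E {a}"
  by (auto simp: clique_def)

lemma stable_singleton: "a \<in> V \<Longrightarrow> stable V E {a}"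
  using adj_irrefl by (auto simp: stable_def)

lemma stable_insert:
  "stable V E S \<Longrightarrow> v \<in> V \<Longrightarrow> \<forall>s\<in>S. \<not> E v s \<Longrightarrow> stable V E (insert v S)"
  using adj_irrefl by (auto simp: stable_def dest: adj_sym)

lemma stable_finite: "stable V E U \<Longrightarrow> finite U"
  using finite_V finite_subset unfolding stable_def by blast

lemma maximal_clique_subset: "maximal_clique V E K \<Longrightarrow> K \<subseteq> V"
  by (simp add: maximal_clique_def clique_def)

lemma maximal_clique_finite: "maximal_clique V E K \<Longrightarrow> finite K"
  using maximal_clique_subset finite_V finite_subset by blast

lemma maximal_clique_adj:
  "maximal_clique V E K \<Longrightarrow> a \<in> K \<Longrightarrow> b \<in> K \<Longrightarrow> a \<noteq> b \<Longrightarrow> E a b"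
  by (simp add: maximal_clique_def clique_def)

lemma maximal_clique_nonadj_outside:
  assumes K: "maximal_clique V E K" and v: "v \<in> V" "v \<notin> K"
  shows "\<exists>c\<in>K. \<not> E v c"
proof (rule ccontr)
  assume "\<not> ?thesis"
  then have "clique V E (insert v K)"
    using K v unfolding maximal_clique_def clique_def by (auto dest: adj_sym)
  then show False
    using K v unfolding maximal_clique_def by blast
qed

lemma maximal_clique_nonempty:
  assumes "V \<noteq> {}" and "maximal_clique V E K"
  shows "K \<noteq> {}"
proof
  assume "K = {}"
  obtain v where "v \<in> V"
    using assms(1) by blast
  then show False
    using maximal_clique_nonadj_outside[OF assms(2)] \<open>K = {}\<close> by blast
qed

lemma maximal_stable_adj_outside:
  assumes S: "maximal_stable V E S" and v: "v \<in> V" "v \<notin> S"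
  shows "\<exists>s\<in>S. E v s"
proof (rule ccontr)
  assume "\<not> ?thesis"
  then have "stable V E (insert v S)"
    using S v stable_insert unfolding maximal_stable_def by blast
  then show False
    using S v unfolding maximal_stable_def by blast
qed

lemma clique_extends_maximal:
  assumes "clique V E C"
  shows "\<exists>K. maximal_clique V E K \<and> C \<subseteq> K"
proof -
  have "\<And>K. clique V E K \<Longrightarrow> K \<subseteq> V"
    by (simp add: clique_def)
  then show ?thesis
    using ex_maximal_superset[of V "clique V E", OF finite_V _ assms]
    unfolding maximal_clique_def by blast
qed

lemma stable_extends_maximal:
  assumes "stable V E S"
  shows "\<exists>T. maximal_stable V E T \<and> S \<subseteq> T"
proof -
  have "\<And>T. stable V E T \<Longrightarrow> T \<subseteq> V"
    by (simp add: stable_def)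
  then show ?thesis
    using ex_maximal_superset[of V "stable V E", OF finite_V _ assms]
    unfolding maximal_stable_def by blast
qed

lemma edge_extends_maximal_clique:
  "E a b \<Longrightarrow> \<exists>K. maximal_clique V E K \<and> a \<in> K \<and> b \<in> K"
  using clique_extends_maximal[OF clique_edge] by blast

lemma edge_clique_no_common_neighbour:
  assumes K: "maximal_clique V E {x, y}" and xa: "E x a"
  shows "\<not> E y a"
proof
  assume ya: "E y a"
  have "a \<notin> {x, y}"
    using xa ya adj_neq by blast
  moreover have "clique V E (insert a {x, y})"
    using K xa ya adj_in_V2 unfolding maximal_clique_def clique_def
    by (auto dest: adj_sym)
  ultimately show False
    using K unfolding maximal_clique_def by blast
qed

lemma nonsimplicial_neighbour_outside:
  assumes K: "maximal_clique V E K" and v: "v \<in> K" and ns: "\<not> simplicial_vertex V E v"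
  shows "\<exists>u. E v u \<and> u \<notin> K"
proof (rule ccontr)
  assume "\<not> ?thesis"
  then have "closed_nbhd V E v \<subseteq> K"
    using v by (auto simp: closed_nbhd_def)
  moreover have "clique V E K"
    using K by (simp add: maximal_clique_def)
  ultimately have "clique V E (closed_nbhd V E v)"
    by (auto simp: clique_def)
  then show False
    using ns v maximal_clique_subset[OF K] by (auto simp: simplicial_vertex_def)
qed

lemma simplicial_vertex_maximal_clique:
  assumes w: "simplicial_vertex V E w" and K: "maximal_clique V E K" "w \<in> K"
  shows "K = closed_nbhd V E w"
proof -
  have "K \<subseteq> closed_nbhd V E w"
  proof
    fix u assume "u \<in> K"
    then have "u = w \<or> E w u"
      using maximal_clique_adj[OF K(1) K(2)] by blast
    then show "u \<in> closed_nbhd V E w"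
      using adj_in_V2 by (auto simp: closed_nbhd_def)
  qed
  moreover have "clique V E (closed_nbhd V E w)"
    using w by (simp add: simplicial_vertex_def)
  ultimately show ?thesis
    using K(1) unfolding maximal_clique_def by blast
qed

lemma nonsimplicial_clique_if_not_clique_simplicial:
  assumes "\<not> clique_simplicial V E"
  obtains K where "maximal_clique V E K" "\<forall>w\<in>K. \<not> simplicial_vertex V E w"
proof -
  obtain K where K: "maximal_clique V E K" "\<not> simplicial_clique V E K"
    using assms unfolding clique_simplicial_def by blast
  have "\<not> simplicial_vertex V E w" if "w \<in> K" for w
    using K simplicial_vertex_maximal_clique[OF _ K(1) that]
    unfolding simplicial_clique_def by blast
  then show ?thesis
    using that K(1) by blast
qed

lemma clique_simplicial_imp_CIS:
  assumes cs: "clique_simplicial V E"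
  shows "CIS V E"
  unfolding CIS_def strong_clique_def
proof (intro allI impI conjI)
  fix K assume K: "maximal_clique V E K"
  show "clique V E K"
    using K by (simp add: maximal_clique_def)
  fix S assume S: "maximal_stable V E S"
  obtain v where v: "simplicial_vertex V E v" "K = closed_nbhd V E v"
    using cs K unfolding clique_simplicial_def simplicial_clique_def by blast
  then have "v \<in> V"
    by (simp add: simplicial_vertex_def)
  then have "v \<in> S \<or> (\<exists>s\<in>S. E v s)"
    using maximal_stable_adj_outside[OF S] by blast
  then show "K \<inter> S \<noteq> {}"
    using v(2) adj_in_V2 by (auto simp: closed_nbhd_def)
qed

end

section \<open>Complete bipartite graphs and rook graphs\<close>

lemma graph_iso_sym:
  assumes "graph_iso V E V' E'"
  shows "graph_iso V' E' V E"
proof -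
  obtain f where f: "bij_betw f V V'" "\<forall>x\<in>V. \<forall>y\<in>V. E x y \<longleftrightarrow> E' (f x) (f y)"
    using assms unfolding graph_iso_def by blast
  let ?g = "inv_into V f"
  have g: "bij_betw ?g V' V"
    using bij_betw_inv_into[OF f(1)] .
  have "E' x y \<longleftrightarrow> E (?g x) (?g y)" if "x \<in> V'" "y \<in> V'" for x y
    using f that bij_betw_inv_into_right[OF f(1)] bij_betwE[OF g] by metis
  then show ?thesis
    using g unfolding graph_iso_def by blast
qed

lemma Kmn_E_iff:
  "Kmn_E m n x y \<longleftrightarrow> x \<in> Kmn_V m n \<and> y \<in> Kmn_V m n \<and> isl x \<noteq> isl y"
  unfolding Kmn_E_def by (cases x; cases y) auto

lemma line_V_Kmn:
  "line_V (Kmn_V n n) (Kmn_E n n) = {{Inl i, Inr j} | i j. i < n \<and> j < n}"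
proof -
  have "{x, y} \<in> {{Inl i, Inr j} | i j. i < n \<and> j < n}"
    if "x \<in> Kmn_V n n" "y \<in> Kmn_V n n" "isl x \<noteq> isl y" for x y
    using that by (cases x; cases y) (auto simp: Kmn_V_def insert_commute)
  moreover have "{Inl i, Inr j} \<in> line_V (Kmn_V n n) (Kmn_E n n)" if "i < n" "j < n" for i j
    using that unfolding line_V_def Kmn_E_iff by (force simp: Kmn_V_def)
  ultimately show ?thesis
    unfolding line_V_def Kmn_E_iff by blast
qed

lemma Inl_Inr_doubleton_eq_iff:
  "{Inl a, Inr b} = {Inl c, Inr d} \<longleftrightarrow> a = c \<and> b = d"
  by (auto simp: doubleton_eq_iff)

lemma Inl_Inr_doubleton_Int_empty_iff:
  "{Inl a, Inr b} \<inter> {Inl c, Inr d} = {} \<longleftrightarrow> a \<noteq> c \<and> b \<noteq> d"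
  by auto

context simple_graph
begin

lemma complete_multipartite_CIS:
  assumes adj: "\<forall>x\<in>V. \<forall>y\<in>V. E x y \<longleftrightarrow> \<phi> x \<noteq> \<phi> y" and ne: "V \<noteq> {}"
  shows "CIS V E"
  unfolding CIS_def strong_clique_def
proof (intro allI impI conjI)
  fix K assume K: "maximal_clique V E K"
  show "clique V E K"
    using K by (simp add: maximal_clique_def)
  fix S assume S: "maximal_stable V E S"
  show "K \<inter> S \<noteq> {}"
  proof
    assume KS: "K \<inter> S = {}"
    obtain k1 where k1: "k1 \<in> K"
      using maximal_clique_nonempty[OF ne K] by blast
    have k1V: "k1 \<in> V"
      using maximal_clique_subset[OF K] k1 by blast
    obtain s1 where s1: "s1 \<in> S" "E k1 s1"
      using maximal_stable_adj_outside[OF S k1V] KS k1 by blast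
    have s1V: "s1 \<in> V"
      using adj_in_V2[OF s1(2)] .
    obtain k2 where k2: "k2 \<in> K" "\<not> E s1 k2"
      using maximal_clique_nonadj_outside[OF K s1V] KS s1(1) by blast
    have k2V: "k2 \<in> V"
      using maximal_clique_subset[OF K] k2(1) by blast
    obtain s2 where s2: "s2 \<in> S" "E k2 s2"
      using maximal_stable_adj_outside[OF S k2V] KS k2(1) by blast
    have s2V: "s2 \<in> V"
      using adj_in_V2[OF s2(2)] .
    have "\<phi> s1 = \<phi> k2" and "\<phi> k2 \<noteq> \<phi> s2"
      using adj s1V k2V s2V k2(2) s2(2) by blast+
    then have "E s1 s2"
      using adj s1V s2V by simp
    then show False
      using S s1(1) s2(1) unfolding maximal_stable_def stable_def by blast
  qed
qed

lemma rook_graph_maximal_clique_is_line: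
  fixes a b :: "'a \<Rightarrow> 'b"
  assumes adj: "\<forall>x\<in>V. \<forall>y\<in>V. E x y \<longleftrightarrow> x \<noteq> y \<and> (a x = a y \<or> b x = b y)"
    and K: "maximal_clique V E K" and k0: "k0 \<in> K"
  shows "K = {x\<in>V. a x = a k0} \<or> K = {x\<in>V. b x = b k0}"
proof -
  have k0V: "k0 \<in> V"
    using maximal_clique_subset[OF K] k0 by blast
  have "K \<subseteq> {x\<in>V. a x = a k0} \<or> K \<subseteq> {x\<in>V. b x = b k0}"
  proof (rule ccontr)
    assume "\<not> ?thesis"
    then obtain k1 k2 where k1: "k1 \<in> K" "a k1 \<noteq> a k0" and k2: "k2 \<in> K" "b k2 \<noteq> b k0"
      using maximal_clique_subset[OF K] by blast
    have V12: "k1 \<in> V" "k2 \<in> V"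
      using maximal_clique_subset[OF K] k1 k2 by auto
    have "E k1 k0" "E k2 k0" "E k1 k2"
      using maximal_clique_adj[OF K] k0 k1 k2 by (metis adj k0V V12)+
    then show False
      using adj V12 k0V k1(2) k2(2) by metis
  qed
  moreover have "clique V E {x\<in>V. a x = a k0}" "clique V E {x\<in>V. b x = b k0}"
    using adj unfolding clique_def by auto
  ultimately show ?thesis
    using K unfolding maximal_clique_def by blast
qed

lemma rook_graph_line_meets_maximal_stable:
  fixes a b :: "'a \<Rightarrow> nat"
  assumes adj: "\<forall>x\<in>V. \<forall>y\<in>V. E x y \<longleftrightarrow> x \<noteq> y \<and> (a x = a y \<or> b x = b y)"
    and rng: "\<forall>x\<in>V. a x < n \<and> b x < n"
    and sur: "\<forall>i<n. \<forall>j<n. \<exists>x\<in>V. a x = i \<and> b x = j"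
    and S: "maximal_stable V E S" and \<alpha>: "\<alpha> < n"
  shows "{x\<in>V. a x = \<alpha>} \<inter> S \<noteq> {}"
proof
  assume KS: "{x\<in>V. a x = \<alpha>} \<inter> S = {}"
  have stS: "stable V E S"
    using S by (simp add: maximal_stable_def)
  have "\<exists>s\<in>S. b s = j \<and> a s \<noteq> \<alpha>" if j: "j < n" for j
  proof -
    obtain x where x: "x \<in> V" "a x = \<alpha>" "b x = j"
      using sur \<alpha> j by blast
    obtain s where s: "s \<in> S" "E x s"
      using maximal_stable_adj_outside[OF S x(1)] x KS by blast
    have sV: "s \<in> V"
      using adj_in_V2[OF s(2)] .
    then have "a s \<noteq> \<alpha>"
      using KS s(1) by blast
    moreover have "b s = j"
      using adj x s sV calculation by auto
    ultimately show ?thesis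
      using s(1) by blast
  qed
  then obtain \<sigma> where \<sigma>: "\<And>j. j < n \<Longrightarrow> \<sigma> j \<in> S \<and> b (\<sigma> j) = j \<and> a (\<sigma> j) \<noteq> \<alpha>"
    by metis
  have SV: "S \<subseteq> V"
    using stS by (simp add: stable_def)
  have "inj_on (\<lambda>j. a (\<sigma> j)) {..<n}"
  proof (rule inj_onI)
    fix i j assume ij: "i \<in> {..<n}" "j \<in> {..<n}" and eq: "a (\<sigma> i) = a (\<sigma> j)"
    have "\<sigma> i \<in> S" "\<sigma> j \<in> S"
      using \<sigma> ij by auto
    then have "\<not> E (\<sigma> i) (\<sigma> j)"
      using stS unfolding stable_def by blast
    then have "\<sigma> i = \<sigma> j"
      using adj eq SV \<open>\<sigma> i \<in> S\<close> \<open>\<sigma> j \<in> S\<close> by blast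
    then show "i = j"
      using \<sigma> ij by (metis lessThan_iff)
  qed
  moreover have "(\<lambda>j. a (\<sigma> j)) ` {..<n} \<subseteq> {..<n} - {\<alpha>}"
    using \<sigma> SV rng by fastforce
  ultimately have "card {..<n} \<le> card ({..<n} - {\<alpha>})"
    using card_inj_on_le by blast
  then show False
    using \<alpha> by simp
qed

lemma rook_graph_CIS:
  fixes a b :: "'a \<Rightarrow> nat"
  assumes adj: "\<forall>x\<in>V. \<forall>y\<in>V. E x y \<longleftrightarrow> x \<noteq> y \<and> (a x = a y \<or> b x = b y)"
    and rng: "\<forall>x\<in>V. a x < n \<and> b x < n"
    and sur: "\<forall>i<n. \<forall>j<n. \<exists>x\<in>V. a x = i \<and> b x = j" and ne: "V \<noteq> {}"
  shows "CIS V E"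
  unfolding CIS_def strong_clique_def
proof (intro allI impI conjI)
  fix K assume K: "maximal_clique V E K"
  show "clique V E K"
    using K by (simp add: maximal_clique_def)
  fix S assume S: "maximal_stable V E S"
  obtain k0 where k0: "k0 \<in> K" "k0 \<in> V"
    using maximal_clique_nonempty[OF ne K] maximal_clique_subset[OF K] by blast
  have adj': "\<forall>x\<in>V. \<forall>y\<in>V. E x y \<longleftrightarrow> x \<noteq> y \<and> (b x = b y \<or> a x = a y)"
    using adj by blast
  have sur': "\<forall>j<n. \<forall>i<n. \<exists>x\<in>V. b x = j \<and> a x = i"
    using sur by blast
  have rng': "\<forall>x\<in>V. b x < n \<and> a x < n"
    using rng by blast
  show "K \<inter> S \<noteq> {}"
    using rook_graph_maximal_clique_is_line[OF adj K k0(1)]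
  proof
    assume "K = {x\<in>V. a x = a k0}"
    then show ?thesis
      using rook_graph_line_meets_maximal_stable[OF adj rng sur S] rng k0(2) by simp
  next
    assume "K = {x\<in>V. b x = b k0}"
    then show ?thesis
      using rook_graph_line_meets_maximal_stable[OF adj' rng' sur' S] rng k0(2) by simp
  qed
qed

lemma graph_iso_Kmn_CIS:
  assumes iso: "graph_iso V E (Kmn_V m n) (Kmn_E m n)" and ne: "V \<noteq> {}"
  shows "CIS V E"
proof -
  obtain f where f: "bij_betw f V (Kmn_V m n)"
    and adj: "\<forall>x\<in>V. \<forall>y\<in>V. E x y \<longleftrightarrow> Kmn_E m n (f x) (f y)"
    using iso unfolding graph_iso_def by blast
  have "E x y \<longleftrightarrow> isl (f x) \<noteq> isl (f y)" if "x \<in> V" "y \<in> V" for x y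
    using adj that bij_betwE[OF f] by (simp add: Kmn_E_iff)
  then show ?thesis
    using complete_multipartite_CIS[of "\<lambda>x. isl (f x)"] ne by blast
qed

lemma graph_iso_rook_CIS:
  assumes iso: "graph_iso V E (line_V (Kmn_V n n) (Kmn_E n n)) (line_E (Kmn_V n n) (Kmn_E n n))"
    and ne: "V \<noteq> {}"
  shows "CIS V E"
proof -
  let ?LV = "line_V (Kmn_V n n) (Kmn_E n n)"
  obtain f where f: "bij_betw f V ?LV"
    and adj: "\<forall>x\<in>V. \<forall>y\<in>V. E x y \<longleftrightarrow> line_E (Kmn_V n n) (Kmn_E n n) (f x) (f y)"
    using iso unfolding graph_iso_def by blast
  have "\<forall>x\<in>V. \<exists>i j. f x = {Inl i, Inr j} \<and> i < n \<and> j < n"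
    using bij_betwE[OF f] unfolding line_V_Kmn by blast
  from bchoice[OF this] obtain a
    where "\<forall>x\<in>V. \<exists>j. f x = {Inl (a x), Inr j} \<and> a x < n \<and> j < n" ..
  from bchoice[OF this] obtain b
    where ab: "\<forall>x\<in>V. f x = {Inl (a x), Inr (b x)} \<and> a x < n \<and> b x < n" ..
  have "E x y \<longleftrightarrow> x \<noteq> y \<and> (a x = a y \<or> b x = b y)" if xy: "x \<in> V" "y \<in> V" for x y
  proof -
    have "E x y \<longleftrightarrow> f x \<noteq> f y \<and> f x \<inter> f y \<noteq> {}"
      using adj xy bij_betwE[OF f] unfolding line_E_def by blast
    moreover have "f x = f y \<longleftrightarrow> x = y"
      using inj_on_eq_iff[OF bij_betw_imp_inj_on[OF f] xy] .
    moreover have "f x \<inter> f y \<noteq> {} \<longleftrightarrow> a x = a y \<or> b x = b y"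
      using ab xy by auto
    ultimately show ?thesis
      by blast
  qed
  moreover have "\<exists>x\<in>V. a x = i \<and> b x = j" if "i < n" "j < n" for i j
  proof -
    have "{Inl i, Inr j} \<in> f ` V"
      using that bij_betw_imp_surj_on[OF f] unfolding line_V_Kmn by blast
    then obtain x where "x \<in> V" "{Inl i, Inr j} = f x"
      by blast
    then show ?thesis
      using ab Inl_Inr_doubleton_eq_iff by metis
  qed
  ultimately show ?thesis
    using rook_graph_CIS[of a b n] ab ne by blast
qed

lemma graph_iso_complete_bipartite:
  assumes fin: "finite A" "finite B" and AB: "A \<inter> B = {}" "A \<union> B = V"
    and adj: "\<forall>v\<in>V. \<forall>w\<in>V. E v w \<longleftrightarrow> (v \<in> A \<and> w \<in> B) \<or> (v \<in> B \<and> w \<in> A)"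
  shows "graph_iso V E (Kmn_V (card A) (card B)) (Kmn_E (card A) (card B))"
proof -
  obtain gA where gA: "bij_betw gA {..<card A} A"
    using ex_bij_betw_nat_finite[OF fin(1)] atLeast0LessThan by auto
  obtain gB where gB: "bij_betw gB {..<card B} B"
    using ex_bij_betw_nat_finite[OF fin(2)] atLeast0LessThan by auto
  define h where "h = case_sum gA gB"
  have "bij_betw h (Inl ` {..<card A}) A"
    using bij_betw_comp_iff[of Inl "{..<card A}" "Inl ` {..<card A}" h A] gA
    by (simp add: h_def comp_def inj_on_def bij_betw_def)
  moreover have "bij_betw h (Inr ` {..<card B}) B"
    using bij_betw_comp_iff[of Inr "{..<card B}" "Inr ` {..<card B}" h B] gB
    by (simp add: h_def comp_def inj_on_def bij_betw_def)
  ultimately have h: "bij_betw h (Kmn_V (card A) (card B)) V"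
    using bij_betw_combine AB unfolding Kmn_V_def by metis
  have side: "h u \<in> A \<longleftrightarrow> isl u" if "u \<in> Kmn_V (card A) (card B)" for u
    using that AB(1) bij_betwE[OF gA] bij_betwE[OF gB] by (auto simp: Kmn_V_def h_def)
  have "\<forall>u\<in>Kmn_V (card A) (card B). \<forall>w\<in>Kmn_V (card A) (card B).
      Kmn_E (card A) (card B) u w \<longleftrightarrow> E (h u) (h w)"
    using adj side bij_betwE[OF h] AB unfolding Kmn_E_iff by blast
  then show ?thesis
    using graph_iso_sym h unfolding graph_iso_def by blast
qed

lemma graph_iso_rook_if_coordinates:
  assumes g: "bij_betw g {..<n} A" and h: "bij_betw h {..<n} B"
    and coords: "\<forall>v\<in>V. a v \<in> A \<and> b v \<in> B"
    and inj: "\<forall>v\<in>V. \<forall>w\<in>V. a v = a w \<and> b v = b w \<longrightarrow> v = w"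
    and surj: "\<forall>x\<in>A. \<forall>y\<in>B. \<exists>v\<in>V. a v = x \<and> b v = y"
    and adj: "\<forall>v\<in>V. \<forall>w\<in>V. E v w \<longleftrightarrow> v \<noteq> w \<and> (a v = a w \<or> b v = b w)"
  shows "graph_iso V E (line_V (Kmn_V n n) (Kmn_E n n)) (line_E (Kmn_V n n) (Kmn_E n n))"
proof -
  let ?LV = "line_V (Kmn_V n n) (Kmn_E n n)"
  define ig where "ig = inv_into {..<n} g"
  define ih where "ih = inv_into {..<n} h"
  have ig: "ig ` A = {..<n}" "inj_on ig A"
    using bij_betw_inv_into[OF g] unfolding ig_def bij_betw_def by auto
  have ih: "ih ` B = {..<n}" "inj_on ih B"
    using bij_betw_inv_into[OF h] unfolding ih_def bij_betw_def by auto
  define f where "f v = {Inl (ig (a v)), Inr (ih (b v))}" for v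
  have f_eq: "f v = f w \<longleftrightarrow> a v = a w \<and> b v = b w" if "v \<in> V" "w \<in> V" for v w
    using coords that inj_on_eq_iff[OF ig(2)] inj_on_eq_iff[OF ih(2)]
    unfolding f_def Inl_Inr_doubleton_eq_iff by simp
  have f_Int: "f v \<inter> f w \<noteq> {} \<longleftrightarrow> a v = a w \<or> b v = b w" if "v \<in> V" "w \<in> V" for v w
    using coords that inj_on_eq_iff[OF ig(2)] inj_on_eq_iff[OF ih(2)]
    unfolding f_def Inl_Inr_doubleton_Int_empty_iff by simp
  have f_LV: "f v \<in> ?LV" if "v \<in> V" for v
  proof -
    have "ig (a v) < n" "ih (b v) < n"
      using coords that ig(1) ih(1) by auto
    then show ?thesis
      unfolding line_V_Kmn f_def by blast
  qed
  have "?LV \<subseteq> f ` V"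
  proof
    fix e assume "e \<in> ?LV"
    then obtain i j where e: "e = {Inl i, Inr j}" "i < n" "j < n"
      unfolding line_V_Kmn by blast
    then obtain x y where "x \<in> A" "i = ig x" "y \<in> B" "j = ih y"
      using ig(1) ih(1) by (metis imageE lessThan_iff)
    moreover obtain v where "v \<in> V" "a v = x" "b v = y"
      using surj calculation by blast
    ultimately show "e \<in> f ` V"
      using e(1) unfolding f_def by blast
  qed
  then have "f ` V = ?LV"
    using f_LV by blast
  moreover have "inj_on f V"
    using f_eq inj by (auto simp: inj_on_def)
  moreover have "E v w \<longleftrightarrow> line_E (Kmn_V n n) (Kmn_E n n) (f v) (f w)"
    if "v \<in> V" "w \<in> V" for v w
  proof -
    have "v = w \<longleftrightarrow> a v = a w \<and> b v = b w"
      using inj that by blast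
    then show ?thesis
      using adj that f_eq[OF that] f_Int[OF that] f_LV[OF that(1)] f_LV[OF that(2)]
      unfolding line_E_def by blast
  qed
  ultimately show ?thesis
    unfolding graph_iso_def bij_betw_def by blast
qed

end

section \<open>Diamond-free CIS graphs\<close>

locale diamond_free_graph = simple_graph +
  assumes diamond_free: "diamond_free V E"
begin

lemma no_diamond:
  assumes "a \<in> V" "b \<in> V" "c \<in> V" "d \<in> V" "distinct [a, b, c, d]"
    and "E a b" "E a c" "E a d" "E b c" "E b d"
  shows "E c d"
  using diamond_free assms unfolding diamond_free_def by blast

lemma maximal_clique_outside_neighbour_unique:
  assumes K: "maximal_clique V E K" and v: "v \<notin> K" and ab: "a \<in> K" "b \<in> K"
    and va: "E v a" and vb: "E v b"
  shows "a = b"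
proof (rule ccontr)
  assume "a \<noteq> b"
  have vV: "v \<in> V"
    using adj_in_V1[OF va] .
  obtain c where c: "c \<in> K" "\<not> E v c"
    using maximal_clique_nonadj_outside[OF K vV v] by blast
  have "c \<noteq> a" "c \<noteq> b" "v \<noteq> c" "v \<noteq> a" "v \<noteq> b"
    using c va vb v ab by auto
  moreover have "E a b" "E a c" "E b c"
    using maximal_clique_adj[OF K] ab c(1) \<open>a \<noteq> b\<close> calculation by auto
  moreover have "a \<in> V" "b \<in> V" "c \<in> V"
    using maximal_clique_subset[OF K] ab c(1) by auto
  ultimately have "E v c"
    using no_diamond[of a b v c] vV \<open>a \<noteq> b\<close> adj_sym[OF va] adj_sym[OF vb] by simp
  then show False
    using c(2) by contradiction
qed

lemma maximal_clique_Int_unique: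
  assumes K: "maximal_clique V E K" and Q: "maximal_clique V E Q" and "K \<noteq> Q"
    and "a \<in> K" "a \<in> Q" "b \<in> K" "b \<in> Q"
  shows "a = b"
proof (rule ccontr)
  assume ab: "a \<noteq> b"
  have "\<not> Q \<subseteq> K"
    using K Q \<open>K \<noteq> Q\<close> unfolding maximal_clique_def by blast
  then obtain v where v: "v \<in> Q" "v \<notin> K"
    by blast
  then have "E v a" "E v b"
    using maximal_clique_adj[OF Q] assms(4-7) by auto
  then show False
    using maximal_clique_outside_neighbour_unique[OF K v(2)] assms(4,6) ab by blast
qed

lemma card_maximal_clique_neighbours_le:
  assumes K: "maximal_clique V E K" and U: "finite U" "U \<inter> K = {}"
  shows "card {r\<in>K. \<exists>u\<in>U. E u r} \<le> card U"
proof -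
  have le1: "card {r\<in>K. E u r} \<le> 1" if "u \<in> U" for u
  proof -
    have "u \<notin> K"
      using U(2) that by blast
    then have "\<forall>a\<in>{r\<in>K. E u r}. \<forall>b\<in>{r\<in>K. E u r}. a = b"
      using maximal_clique_outside_neighbour_unique[OF K] by blast
    moreover have "finite {r\<in>K. E u r}"
      using maximal_clique_finite[OF K] by simp
    ultimately show ?thesis
      unfolding One_nat_def using card_le_Suc0_iff_eq by blast
  qed
  have "card {r\<in>K. \<exists>u\<in>U. E u r} = card (\<Union>u\<in>U. {r\<in>K. E u r})"
    by (rule arg_cong[where f = card]) blast
  also have "\<dots> \<le> (\<Sum>u\<in>U. card {r\<in>K. E u r})"
    by (rule card_UN_le[OF U(1)])
  also have "\<dots> \<le> (\<Sum>u\<in>U. 1)"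
    using le1 by (rule sum_mono)
  finally show ?thesis
    by simp
qed

end

locale diamond_free_CIS_graph = diamond_free_graph +
  assumes CIS: "CIS V E"
begin

lemma maximal_clique_meets_maximal_stable:
  "maximal_clique V E K \<Longrightarrow> maximal_stable V E S \<Longrightarrow> K \<inter> S \<noteq> {}"
  using CIS by (simp add: CIS_def strong_clique_def)

lemma stable_not_dominates_maximal_clique:
  assumes T: "stable V E T" and K: "maximal_clique V E K"
  shows "\<not> (\<forall>p\<in>K. \<exists>t\<in>T. E p t)"
proof
  assume dom: "\<forall>p\<in>K. \<exists>t\<in>T. E p t"
  obtain S where S: "maximal_stable V E S" "T \<subseteq> S"
    using stable_extends_maximal[OF T] by blast
  then obtain p where p: "p \<in> K" "p \<in> S"
    using maximal_clique_meets_maximal_stable[OF K] by blast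
  then obtain t where "t \<in> S" "E p t"
    using dom S(2) by blast
  then show False
    using S(1) p(2) unfolding maximal_stable_def stable_def by blast
qed

lemma edge_clique_neighbourhoods_adj:
  assumes K: "maximal_clique V E {x, y}" and v: "E y v" and w: "E x w"
  shows "E v w"
proof (cases "v = x \<or> w = y")
  case True
  then show ?thesis
    using v w adj_sym by blast
next
  case False
  show ?thesis
  proof (rule ccontr)
    assume nvw: "\<not> E v w"
    have "v \<noteq> w"
      using edge_clique_no_common_neighbour[OF K w] v by blast
    then have "stable V E {v, w}"
      using nvw adj_in_V2[OF v] adj_in_V2[OF w] adj_irrefl
      unfolding stable_def by (auto dest: adj_sym)
    moreover have "\<forall>p\<in>{x, y}. \<exists>q\<in>{v, w}. E p q"
      using v w by blast
    ultimately show False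
      using stable_not_dominates_maximal_clique[OF _ K] by blast
  qed
qed

lemma maximal_stable_dominates_nonsimplicial_clique:
  assumes K: "maximal_clique V E K" and ns: "\<forall>w\<in>K. \<not> simplicial_vertex V E w"
    and S: "maximal_stable V E S" and x: "x \<in> K" "x \<in> S" and y: "y \<in> K" "y \<noteq> x"
  shows "\<exists>s\<in>S. s \<noteq> x \<and> E y s"
proof -
  obtain a where a: "E y a" "a \<notin> K"
    using nonsimplicial_neighbour_outside[OF K y(1)] ns y(1) by blast
  obtain Q where Q: "maximal_clique V E Q" "y \<in> Q" "a \<in> Q"
    using edge_extends_maximal_clique[OF a(1)] by blast
  obtain s where s: "s \<in> Q" "s \<in> S"
    using maximal_clique_meets_maximal_stable[OF Q(1) S] by blast
  have "E y x"
    using maximal_clique_adj[OF K y(1) x(1) y(2)] .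
  then have "s \<noteq> y"
    using s(2) x(2) S unfolding maximal_stable_def stable_def by blast
  moreover have "x \<notin> Q"
    using maximal_clique_outside_neighbour_unique[OF K a(2) x(1) y(1)]
      maximal_clique_adj[OF Q(1)] Q a(2) x(1) y(2) adj_sym[OF a(1)] by blast
  moreover have "s \<noteq> x"
    using s(1) \<open>x \<notin> Q\<close> by blast
  ultimately show ?thesis
    using s(2) maximal_clique_adj[OF Q(1) Q(2) s(1)] by blast
qed

lemma nonsimplicial_clique_neighbour_nonsimplicial:
  assumes K: "maximal_clique V E K" and ns: "\<forall>w\<in>K. \<not> simplicial_vertex V E w"
    and x: "x \<in> K" and xb: "E x b" and bK: "b \<notin> K"
  shows "\<not> simplicial_vertex V E b"
proof
  assume sb: "simplicial_vertex V E b"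
  have xV: "x \<in> V" and bV: "b \<in> V"
    using adj_in_V1[OF xb] adj_in_V2[OF xb] .
  obtain S where S: "maximal_stable V E S" "x \<in> S"
    using stable_extends_maximal[OF stable_singleton[OF xV]] by blast
  have stS: "stable V E S"
    using S(1) by (simp add: maximal_stable_def)
  have "\<not> E b s" if s: "s \<in> S" "s \<noteq> x" for s
  proof
    assume "E b s"
    then have "x \<in> closed_nbhd V E b" "s \<in> closed_nbhd V E b"
      using adj_sym[OF xb] xV adj_in_V2 unfolding closed_nbhd_def by blast+
    moreover have "clique V E (closed_nbhd V E b)"
      using sb by (simp add: simplicial_vertex_def)
    ultimately have "E x s"
      using s(2) by (simp add: clique_def)
    then show False
      using stS S(2) s(1) unfolding stable_def by blast
  qed
  moreover have "stable V E (S - {x})"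
    using stS by (auto simp: stable_def)
  ultimately have "stable V E (insert b (S - {x}))"
    using bV stable_insert[of "S - {x}" b] by blast
  moreover have "\<exists>t\<in>insert b (S - {x}). E p t" if "p \<in> K" for p
  proof (cases "p = x")
    case True
    then show ?thesis
      using xb by blast
  next
    case False
    then show ?thesis
      using maximal_stable_dominates_nonsimplicial_clique[OF K ns S(1) x S(2) that] by blast
  qed
  ultimately show False
    using stable_not_dominates_maximal_clique[OF _ K] by blast
qed

lemma nonsimplicial_clique_through_vertex:
  assumes K: "maximal_clique V E K" and ns: "\<forall>w\<in>K. \<not> simplicial_vertex V E w"
    and w: "w \<in> K" and Q: "maximal_clique V E Q" "w \<in> Q"
  shows "\<forall>z\<in>Q. \<not> simplicial_vertex V E z"
proof
  fix z assume z: "z \<in> Q"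
  show "\<not> simplicial_vertex V E z"
  proof (cases "z \<in> K")
    case True
    then show ?thesis
      using ns by blast
  next
    case False
    then have "E w z"
      using maximal_clique_adj[OF Q(1) Q(2) z] w by blast
    then show ?thesis
      using nonsimplicial_clique_neighbour_nonsimplicial[OF K ns w _ False] by blast
  qed
qed

lemma no_simplicial_vertex_if_nonsimplicial_clique:
  assumes con: "connected_graph V E" and K0: "maximal_clique V E K0"
    and ns0: "\<forall>w\<in>K0. \<not> simplicial_vertex V E w"
  shows "\<forall>v\<in>V. \<not> simplicial_vertex V E v"
proof
  let ?P = "\<lambda>v. \<exists>K. maximal_clique V E K \<and> v \<in> K \<and> (\<forall>w\<in>K. \<not> simplicial_vertex V E w)"
  fix v assume v: "v \<in> V"
  obtain v0 where v0: "v0 \<in> K0"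
    using maximal_clique_nonempty[OF _ K0] v by blast
  then have "E\<^sup>*\<^sup>* v0 v"
    using con v maximal_clique_subset[OF K0] unfolding connected_graph_def by blast
  then have "?P v"
  proof (induction rule: rtranclp_induct)
    case base
    then show ?case
      using K0 ns0 v0 by blast
  next
    case (step y z)
    then obtain K where K: "maximal_clique V E K" "y \<in> K" "\<forall>w\<in>K. \<not> simplicial_vertex V E w"
      by blast
    obtain Q where "maximal_clique V E Q" "y \<in> Q" "z \<in> Q"
      using edge_extends_maximal_clique[OF step(2)] by blast
    then show ?case
      using nonsimplicial_clique_through_vertex[OF K(1,3,2)] by blast
  qed
  then show "\<not> simplicial_vertex V E v"
    by blast
qed

end

section \<open>Maximal cliques of size two\<close>

locale nonsimplicial_CIS_graph = diamond_free_CIS_graph +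
  assumes connected: "connected_graph V E"
    and no_simplicial: "\<forall>v\<in>V. \<not> simplicial_vertex V E v"
begin

lemma V_nonempty: "V \<noteq> {}"
  using connected by (simp add: connected_graph_def)

lemma neighbour_outside_maximal_clique:
  assumes "maximal_clique V E K" and "v \<in> K"
  shows "\<exists>u. E v u \<and> u \<notin> K"
  using nonsimplicial_neighbour_outside assms no_simplicial maximal_clique_subset by blast

lemma card_maximal_clique_ge_2:
  assumes K: "maximal_clique V E K"
  shows "2 \<le> card K"
proof -
  obtain v where v: "v \<in> K"
    using maximal_clique_nonempty[OF V_nonempty K] by blast
  obtain u where u: "E v u" "u \<notin> K"
    using neighbour_outside_maximal_clique[OF K v] by blast
  obtain c where c: "c \<in> K" "\<not> E u c"
    using maximal_clique_nonadj_outside[OF K adj_in_V2[OF u(1)] u(2)] by blast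
  have "v \<noteq> c"
    using c(2) adj_sym[OF u(1)] by blast
  then show ?thesis
    using card_mono[OF maximal_clique_finite[OF K], of "{v, c}"] v c(1) by simp
qed

lemma edge_clique_neighbours_stable:
  assumes K: "maximal_clique V E {x, y}" and a: "E x a" "a \<noteq> y" and a': "E x a'" "a' \<noteq> y"
  shows "\<not> E a a'"
proof
  assume aa': "E a a'"
  have K': "maximal_clique V E {y, x}"
    using K by (simp add: insert_commute)
  obtain b where b: "E y b" "b \<noteq> x"
    using neighbour_outside_maximal_clique[OF K'] by blast
  have ab: "E a b" "E a' b"
    using edge_clique_neighbourhoods_adj[OF K' a(1) b(1)]
      edge_clique_neighbourhoods_adj[OF K' a'(1) b(1)] .
  moreover have "\<not> E x b"
    using edge_clique_no_common_neighbour[OF K'] b(1) by (blast dest: adj_sym)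
  moreover have "distinct [a, a', x, b]"
    using adj_neq[OF aa'] adj_neq[OF a(1)] adj_neq[OF a'(1)] adj_neq[OF ab(1)] adj_neq[OF ab(2)] b(2)
    by auto
  ultimately show False
    using no_diamond[of a a' x b] aa' adj_sym[OF a(1)] adj_sym[OF a'(1)]
      adj_in_V1[OF aa'] adj_in_V2[OF aa'] adj_in_V1[OF a(1)] adj_in_V2[OF b(1)] by blast
qed

lemma edge_clique_neighbour_edge_clique:
  assumes K: "maximal_clique V E {x, y}" and b: "E y b" "b \<noteq> x"
  shows "maximal_clique V E {b, y}"
proof -
  have K': "maximal_clique V E {y, x}"
    using K by (simp add: insert_commute)
  have "C = {b, y}" if C: "clique V E C" "{b, y} \<subseteq> C" for C
  proof (rule ccontr)
    assume "C \<noteq> {b, y}"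
    then obtain t where t: "t \<in> C" "t \<noteq> b" "t \<noteq> y"
      using C(2) by blast
    then have "E y t" "E t b"
      using C unfolding clique_def by auto
    then show False
      using edge_clique_no_common_neighbour[OF K] b
        edge_clique_neighbours_stable[OF K' \<open>E y t\<close> _ b] by (blast dest: adj_sym)
  qed
  then show ?thesis
    using clique_edge[OF adj_sym[OF b(1)]] unfolding maximal_clique_def by blast
qed

lemma edge_clique_neighbourhood_closed:
  assumes K: "maximal_clique V E {x, y}" "x \<noteq> y" and v: "E y v" and z: "E v z"
  shows "E x z"
proof (cases "v = x")
  case True
  then show ?thesis
    using z by simp
next
  case False
  then have "maximal_clique V E {v, y}"
    using edge_clique_neighbour_edge_clique[OF K(1) v] by blast
  moreover have "E y x"
    using maximal_clique_adj[OF K(1)] K(2) by simp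
  ultimately show ?thesis
    using edge_clique_neighbourhoods_adj z by blast
qed

lemma edge_clique_neighbourhoods_cover:
  assumes K: "maximal_clique V E {x, y}" "x \<noteq> y" and v: "v \<in> V"
  shows "E y v \<or> E x v"
proof -
  have K': "maximal_clique V E {y, x}" "y \<noteq> x"
    using K by (simp_all add: insert_commute)
  have yx: "E y x"
    using maximal_clique_adj[OF K(1)] K(2) by simp
  then have "E\<^sup>*\<^sup>* x v"
    using connected v adj_in_V2 unfolding connected_graph_def by blast
  then show ?thesis
  proof (induction rule: rtranclp_induct)
    case base
    then show ?case
      using yx by blast
  next
    case (step v z)
    then show ?case
      using edge_clique_neighbourhood_closed[OF K] edge_clique_neighbourhood_closed[OF K'] by blast
  qed
qed

lemma card_edge_clique_neighbourhood_ge_2: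
  assumes K: "maximal_clique V E {x, y}" "x \<noteq> y"
  shows "2 \<le> card {v. E x v}"
proof -
  obtain a where "E x a" "a \<noteq> y"
    using neighbour_outside_maximal_clique[OF K(1)] by blast
  moreover have "E x y"
    using maximal_clique_adj[OF K(1)] K(2) by simp
  moreover have "finite {v. E x v}"
    using finite_subset[OF _ finite_V] adj_in_V2 by blast
  ultimately show ?thesis
    using card_mono[of "{v. E x v}" "{y, a}"] by simp
qed

lemma complete_bipartite_if_edge_clique:
  assumes K: "maximal_clique V E {x, y}" "x \<noteq> y"
  shows "\<exists>m n. 2 \<le> m \<and> 2 \<le> n \<and> graph_iso V E (Kmn_V m n) (Kmn_E m n)"
proof -
  have K': "maximal_clique V E {y, x}" "y \<noteq> x"
    using K by (simp_all add: insert_commute)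
  define A where "A = {v. E y v}"
  define B where "B = {v. E x v}"
  have fin: "finite A" "finite B"
    using finite_subset[OF _ finite_V] adj_in_V2 unfolding A_def B_def by blast+
  have AB: "A \<union> B = V"
    using edge_clique_neighbourhoods_cover[OF K] adj_in_V2 unfolding A_def B_def by blast
  have disjoint: "A \<inter> B = {}"
    using edge_clique_no_common_neighbour[OF K(1)] unfolding A_def B_def by blast
  have "E v w \<longleftrightarrow> (v \<in> A \<and> w \<in> B) \<or> (v \<in> B \<and> w \<in> A)" if "v \<in> V" "w \<in> V" for v w
    using that AB edge_clique_neighbourhood_closed[OF K] edge_clique_neighbourhood_closed[OF K']
      edge_clique_neighbourhoods_adj[OF K(1)] edge_clique_neighbourhoods_adj[OF K'(1)]
    unfolding A_def B_def by blast
  moreover have "2 \<le> card A" "2 \<le> card B"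
    using card_edge_clique_neighbourhood_ge_2[OF K'] card_edge_clique_neighbourhood_ge_2[OF K]
    unfolding A_def B_def by simp_all
  ultimately show ?thesis
    using graph_iso_complete_bipartite[OF fin disjoint AB] by blast
qed

end

section \<open>Smallest maximal cliques of size at least three\<close>

locale min_clique_CIS_graph = nonsimplicial_CIS_graph +
  fixes k :: nat
  assumes card_maximal_clique_ge: "maximal_clique V E K \<Longrightarrow> k \<le> card K"
    and k_ge_3: "3 \<le> k"
begin

definition min_clique :: "'a set \<Rightarrow> bool" where
  "min_clique K \<longleftrightarrow> maximal_clique V E K \<and> card K = k"

lemma stable_extend_at_vertex:
  assumes L: "maximal_clique V E L" and U: "stable V E U" "U \<inter> L = {}"
    and p: "p \<in> L" "\<forall>u\<in>U. \<not> E u p" and cU: "card U + 2 \<le> k"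
  shows "\<exists>y. y \<notin> L \<and> y \<notin> U \<and> E y p \<and> stable V E (insert y U)"
proof -
  obtain u0 where u0: "E p u0" "u0 \<notin> L"
    using neighbour_outside_maximal_clique[OF L p(1)] by blast
  obtain Y where Y: "maximal_clique V E Y" "p \<in> Y" "u0 \<in> Y"
    using edge_extends_maximal_clique[OF u0(1)] by blast
  have UY: "U \<inter> Y = {}"
  proof -
    have "u \<notin> Y" if "u \<in> U" for u
      using maximal_clique_adj[OF Y(1) _ Y(2)] p U(2) that by blast
    then show ?thesis
      by blast
  qed
  have "\<not> Y - {p} \<subseteq> {r\<in>Y. \<exists>u\<in>U. E u r}"
  proof
    assume "Y - {p} \<subseteq> {r\<in>Y. \<exists>u\<in>U. E u r}"
    then have "card (Y - {p}) \<le> card {r\<in>Y. \<exists>u\<in>U. E u r}"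
      using maximal_clique_finite[OF Y(1)] by (intro card_mono) auto
    moreover have "card {r\<in>Y. \<exists>u\<in>U. E u r} \<le> card U"
      using card_maximal_clique_neighbours_le[OF Y(1) stable_finite[OF U(1)] UY] .
    moreover have "card (Y - {p}) = card Y - 1" "k \<le> card Y"
      using Y(2) card_maximal_clique_ge[OF Y(1)] by simp_all
    ultimately show False
      using cU by linarith
  qed
  then obtain y where y: "y \<in> Y" "y \<noteq> p" "\<forall>u\<in>U. \<not> E u y"
    by blast
  have "y \<notin> L"
    using maximal_clique_Int_unique[OF Y(1) L _ y(1) _ Y(2) p(1)] y(2) u0 Y(3) by blast
  moreover have "E y p"
    using maximal_clique_adj[OF Y(1) y(1) Y(2) y(2)] .
  moreover have "y \<notin> U"
    using UY y(1) by blast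
  moreover have "stable V E (insert y U)"
    using stable_insert[OF U(1) adj_in_V1[OF calculation(2)]] y(3) by (blast dest: adj_sym)
  ultimately show ?thesis
    by blast
qed

lemma stable_extend_dominating:
  assumes L: "maximal_clique V E L" and P: "finite P" "P \<subseteq> L"
    and U: "stable V E U" "U \<inter> L = {}" "\<forall>u\<in>U. \<forall>p\<in>P. \<not> E u p"
    and cU: "card U + card P < k"
  shows "\<exists>U'. U \<subseteq> U' \<and> stable V E U' \<and> U' \<inter> L = {} \<and> card U' \<le> card U + card P
    \<and> (\<forall>p\<in>P. \<exists>u\<in>U'. E u p) \<and> (\<forall>u\<in>U' - U. \<exists>p\<in>P. E u p)"
  using P U(3) cU
proof (induction P rule: finite_induct)
  case empty
  show ?case
    using U by (intro exI[of _ U]) simp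
next
  case (insert p P)
  obtain U1 where U1: "U \<subseteq> U1" "stable V E U1" "U1 \<inter> L = {}" "card U1 \<le> card U + card P"
      "\<forall>q\<in>P. \<exists>u\<in>U1. E u q" "\<forall>u\<in>U1 - U. \<exists>q\<in>P. E u q"
    using insert by auto
  have pL: "p \<in> L"
    using insert.prems by simp
  have "\<not> E u p" if "u \<in> U1" for u
  proof (cases "u \<in> U")
    case True
    then show ?thesis
      using insert.prems by blast
  next
    case False
    with that have "u \<in> U1 - U"
      by blast
    then obtain q where "q \<in> P" "E u q"
      using U1(6) by blast
    then show ?thesis
      using maximal_clique_outside_neighbour_unique[OF L _ pL, of u q] insert.hyps(2) insert.prems(1)
        U1(3) that by blast
  qed
  moreover have "card U1 + 2 \<le> k"
    using U1(4) insert by simp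
  ultimately obtain y where y: "y \<notin> L" "y \<notin> U1" "E y p" "stable V E (insert y U1)"
    using stable_extend_at_vertex[OF L U1(2,3) pL] by blast
  have "card (insert y U1) \<le> card U + card (insert p P)"
    using U1(4) y(2) stable_finite[OF U1(2)] insert.hyps by simp
  then show ?case
    using U1 y by (intro exI[of _ "insert y U1"]) auto
qed

lemma maximal_clique_minus_vertex_dominated:
  assumes U: "stable V E U" and L: "maximal_clique V E L" and x: "x \<in> L"
    and nx: "\<forall>u\<in>U. \<not> E u x" and dom: "\<forall>p\<in>L - {x}. \<exists>u\<in>U. E u p"
    and R: "maximal_clique V E R" "x \<in> R"
  shows "R - {x} \<subseteq> {r. \<exists>u\<in>U. E u r}"
proof
  fix f assume f: "f \<in> R - {x}"
  show "f \<in> {r. \<exists>u\<in>U. E u r}"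
  proof (rule ccontr)
    assume "f \<notin> {r. \<exists>u\<in>U. E u r}"
    then have "stable V E (insert f U)"
      using stable_insert[OF U] maximal_clique_subset[OF R(1)] f by (blast dest: adj_sym)
    moreover have "\<exists>t\<in>insert f U. E q t" if "q \<in> L" for q
    proof (cases "q = x")
      case True
      then show ?thesis
        using maximal_clique_adj[OF R(1) R(2)] f by blast
    next
      case False
      then show ?thesis
        using dom that by (blast dest: adj_sym)
    qed
    ultimately show False
      using stable_not_dominates_maximal_clique[OF _ L] by blast
  qed
qed

lemma stable_extend_dominating_all_but:
  assumes L: "min_clique L" and x: "x \<in> L"
    and U: "stable V E U" "U \<inter> L = {}" "\<forall>u\<in>U. \<not> E u x"
    and cU: "card U \<le> card {p\<in>L. \<exists>u\<in>U. E u p}"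
  shows "\<exists>U'. U \<subseteq> U' \<and> stable V E U' \<and> U' \<inter> L = {} \<and> (\<forall>u\<in>U'. \<not> E u x)
    \<and> (\<forall>p\<in>L - {x}. \<exists>u\<in>U'. E u p) \<and> card (U' - U) + card {p\<in>L. \<exists>u\<in>U. E u p} < k"
proof -
  let ?D = "{p\<in>L. \<exists>u\<in>U. E u p}"
  define P where "P = L - {x} - ?D"
  have Lmax: "maximal_clique V E L" and cL: "card L = k"
    using L by (simp_all add: min_clique_def)
  have fL: "finite L"
    using maximal_clique_finite[OF Lmax] .
  have D: "?D \<subseteq> L - {x}"
    using U(3) by blast
  have "card (L - {x}) = k - 1"
    using cL x fL by simp
  then have cPD: "card P + card ?D = k - 1"
    using card_Diff_subset[OF finite_subset[OF D] D] card_mono[OF _ D] fL unfolding P_def by simp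
  have P: "finite P" "P \<subseteq> L"
    using fL unfolding P_def by auto
  have UP: "\<forall>u\<in>U. \<forall>p\<in>P. \<not> E u p" "card U + card P < k"
    using cPD cU k_ge_3 unfolding P_def by auto
  obtain U' where U': "U \<subseteq> U'" "stable V E U'" "U' \<inter> L = {}"
      "card U' \<le> card U + card P" "\<forall>p\<in>P. \<exists>u\<in>U'. E u p" "\<forall>u\<in>U' - U. \<exists>p\<in>P. E u p"
    using stable_extend_dominating[OF Lmax P U(1,2) UP] by blast
  have "\<not> E u x" if "u \<in> U'" for u
  proof (cases "u \<in> U")
    case True
    then show ?thesis
      using U(3) by blast
  next
    case False
    with that obtain p where "p \<in> P" "E u p"
      using U'(6) by blast
    then show ?thesis
      using maximal_clique_outside_neighbour_unique[OF Lmax _ x, of u p] U'(3) that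
      unfolding P_def by blast
  qed
  moreover have "\<forall>p\<in>L - {x}. \<exists>u\<in>U'. E u p"
    using U'(1,5) unfolding P_def by blast
  moreover have "card (U' - U) \<le> card P"
    using U'(1,4) card_Diff_subset[OF finite_subset[OF U'(1) stable_finite[OF U'(2)]] U'(1)] by simp
  ultimately show ?thesis
    using U' cPD k_ge_3 by (intro exI[of _ U']) auto
qed

text \<open>U is extended to a stable set dominating L - {x} but not x. By CIS every vertex of
  R - {x} is then dominated, and each added vertex dominates at most one vertex of R.\<close>
lemma card_maximal_clique_through_min_clique_le:
  assumes L: "min_clique L" and x: "x \<in> L" and R: "maximal_clique V E R" "x \<in> R"
    and U: "stable V E U" "U \<inter> L = {}" "\<forall>u\<in>U. \<not> E u x"
    and cU: "card U \<le> card {p\<in>L. \<exists>u\<in>U. E u p}"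
  shows "card R + card {p\<in>L. \<exists>u\<in>U. E u p} \<le> card {r\<in>R. r \<noteq> x \<and> (\<exists>u\<in>U. E u r)} + k"
proof -
  have Lmax: "maximal_clique V E L"
    using L by (simp add: min_clique_def)
  obtain U' where U': "U \<subseteq> U'" "stable V E U'" "U' \<inter> L = {}" "\<forall>u\<in>U'. \<not> E u x"
      "\<forall>p\<in>L - {x}. \<exists>u\<in>U'. E u p" "card (U' - U) + card {p\<in>L. \<exists>u\<in>U. E u p} < k"
    using stable_extend_dominating_all_but[OF L x U cU] by blast
  let ?old = "{r\<in>R. r \<noteq> x \<and> (\<exists>u\<in>U. E u r)}"
  let ?new = "{r\<in>R. \<exists>u\<in>U' - U. E u r}"
  have fR: "finite R"
    using maximal_clique_finite[OF R(1)] .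
  have "R - {x} \<subseteq> ?old \<union> ?new"
    using maximal_clique_minus_vertex_dominated[OF U'(2) Lmax x U'(4,5) R] by blast
  then have "card (R - {x}) \<le> card ?old + card ?new"
    using card_mono[of "?old \<union> ?new" "R - {x}"] card_Un_le[of ?old ?new] fR by fastforce
  moreover have "(U' - U) \<inter> R = {}"
    using maximal_clique_adj[OF R(1) _ R(2)] U'(3,4) x by blast
  then have "card ?new \<le> card (U' - U)"
    using card_maximal_clique_neighbours_le[OF R(1)] stable_finite[OF U'(2)] by blast
  moreover have "card (R - {x}) = card R - 1"
    using R(2) fR by simp
  moreover have "0 < card R"
    using R(2) fR card_gt_0_iff by blast
  ultimately show ?thesis
    using U'(6) by linarith
qed

lemma card_maximal_clique_through_min_clique:
  assumes "min_clique L" "x \<in> L" "maximal_clique V E R" "x \<in> R"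
  shows "card R = k"
  using card_maximal_clique_through_min_clique_le[OF assms, of "{}"]
    card_maximal_clique_ge[OF assms(3)] by (simp add: stable_def)

lemma outside_neighbour_adj_clique_through:
  assumes L: "min_clique L" and pq: "p \<in> L" "q \<in> L" "p \<noteq> q" and u: "E p u" "u \<notin> L"
    and R: "maximal_clique V E R" "q \<in> R"
  shows "\<exists>w\<in>R. w \<noteq> q \<and> E u w"
proof -
  have Lmax: "maximal_clique V E L"
    using L by (simp add: min_clique_def)
  have uniq: "p' = p" if "p' \<in> L" "E u p'" for p'
    using maximal_clique_outside_neighbour_unique[OF Lmax u(2) that(1) pq(1) that(2)] adj_sym[OF u(1)] .
  have D: "{p'\<in>L. \<exists>v\<in>{u}. E v p'} = {p}"
  proof (rule set_eqI)
    fix p'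
    show "p' \<in> {p'\<in>L. \<exists>v\<in>{u}. E v p'} \<longleftrightarrow> p' \<in> {p}"
      using uniq[of p'] pq(1) adj_sym[OF u(1)] by auto
  qed
  have "stable V E {u}"
    using stable_singleton[OF adj_in_V2[OF u(1)]] .
  moreover have "\<forall>v\<in>{u}. \<not> E v q"
    using uniq pq by blast
  ultimately have "card R + 1 \<le> card {r\<in>R. r \<noteq> q \<and> (\<exists>v\<in>{u}. E v r)} + k"
    using card_maximal_clique_through_min_clique_le[OF L pq(2) R, of "{u}"] u(2) D by simp
  then have "0 < card {r\<in>R. r \<noteq> q \<and> (\<exists>v\<in>{u}. E v r)}"
    using card_maximal_clique_through_min_clique[OF L pq(2) R] by linarith
  then show ?thesis
    using card_gt_0_iff[of "{r\<in>R. r \<noteq> q \<and> (\<exists>v\<in>{u}. E v r)}"]     by blast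
qed

lemma outside_neighbours_adj_if_common_neighbour:
  assumes L: "min_clique L" and x: "x \<in> L" and R: "maximal_clique V E R" "x \<in> R"
    and p: "p1 \<in> L" "p2 \<in> L" "p1 \<noteq> x" "p2 \<noteq> x" "p1 \<noteq> p2"
    and u: "E u p1" "u \<notin> L" and w: "E w p2" "w \<notin> L"
    and r: "r \<in> R" "E u r" "E w r"
  shows "E u w"
proof (rule ccontr)
  assume nuw: "\<not> E u w"
  have Lmax: "maximal_clique V E L"
    using L by (simp add: min_clique_def)
  have ux: "\<not> E u x" and wx: "\<not> E w x" and up2: "\<not> E u p2"
    using maximal_clique_outside_neighbour_unique[OF Lmax u(2)]
      maximal_clique_outside_neighbour_unique[OF Lmax w(2)] p x u(1) w(1) by blast+
  then have "u \<noteq> w"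
    using w(1) by blast
  have uR: "u \<notin> R" and wR: "w \<notin> R"
    using maximal_clique_adj[OF R(1) _ R(2)] ux wx u(2) w(2) x by blast+
  let ?U = "{u, w}"
  have "stable V E ?U"
    using nuw adj_in_V1[OF u(1)] adj_in_V1[OF w(1)] adj_irrefl
    unfolding stable_def by (auto dest: adj_sym)
  moreover have "{p1, p2} \<subseteq> {p\<in>L. \<exists>v\<in>?U. E v p}"
    using p u(1) w(1) by blast
  then have cD: "2 \<le> card {p\<in>L. \<exists>v\<in>?U. E v p}"
    using card_mono[of "{p\<in>L. \<exists>v\<in>?U. E v p}" "{p1, p2}"] maximal_clique_finite[OF Lmax] p(5)
    by simp
  moreover have "{r'\<in>R. r' \<noteq> x \<and> (\<exists>v\<in>?U. E v r')} \<subseteq> {r}"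
    using maximal_clique_outside_neighbour_unique[OF R(1) uR _ r(1) _ r(2)]
      maximal_clique_outside_neighbour_unique[OF R(1) wR _ r(1) _ r(3)] by blast
  then have "card {r'\<in>R. r' \<noteq> x \<and> (\<exists>v\<in>?U. E v r')} \<le> 1"
    using card_mono[of "{r}"] by fastforce
  ultimately show False
    using card_maximal_clique_through_min_clique_le[OF L x R, of ?U]
      card_maximal_clique_through_min_clique[OF L x R] u(2) w(2) ux wx \<open>u \<noteq> w\<close> by simp
qed

lemma outside_neighbour_triangle:
  assumes L: "min_clique L" and x: "x \<in> L"
    and p: "p1 \<in> L" "p2 \<in> L" "p1 \<noteq> x" "p2 \<noteq> x" "p1 \<noteq> p2"
    and u: "E p1 u" "u \<notin> L" and W: "maximal_clique V E W" "p2 \<in> W" "W \<noteq> L"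
    and R: "maximal_clique V E R" "x \<in> R" "R \<noteq> L"
  shows "\<exists>r w. r \<in> R \<and> r \<noteq> x \<and> w \<in> W \<and> E u r \<and> E r w \<and> E u w"
proof -
  have Lmax: "maximal_clique V E L"
    using L by (simp add: min_clique_def)
  obtain r where r: "r \<in> R" "r \<noteq> x" "E u r"
    using outside_neighbour_adj_clique_through[OF L p(1) x p(3) u R(1,2)] by blast
  have "r \<notin> L"
    using maximal_clique_Int_unique[OF R(1) Lmax R(3) r(1) _ R(2) x] r(2) by blast
  moreover have "E x r"
    using maximal_clique_adj[OF R(1) R(2) r(1)] r(2) by simp
  ultimately obtain w where w: "w \<in> W" "w \<noteq> p2" "E r w"
    using outside_neighbour_adj_clique_through[OF L x p(2) p(4)[symmetric] _ _ W(1,2)] by blast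
  have "w \<notin> L"
    using maximal_clique_Int_unique[OF W(1) Lmax W(3) w(1) _ W(2) p(2)] w(2) by blast
  moreover have "E w p2"
    using maximal_clique_adj[OF W(1) w(1) W(2) w(2)] .
  ultimately have "E u w"
    using outside_neighbours_adj_if_common_neighbour[OF L x R(1,2) p adj_sym[OF u(1)] u(2)]
      r(1,3) adj_sym[OF w(3)] by blast
  then show ?thesis
    using r w by blast
qed

lemma maximal_clique_through_min_clique_unique:
  assumes L: "min_clique L" and x: "x \<in> L"
    and R: "maximal_clique V E R" "x \<in> R" "R \<noteq> L"
    and R': "maximal_clique V E R'" "x \<in> R'" "R' \<noteq> L"
  shows "R = R'"
proof (rule ccontr)
  assume RR': "R \<noteq> R'"
  have Lmax: "maximal_clique V E L" and cL: "card L = k"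
    using L by (simp_all add: min_clique_def)
  have "\<not> card (L - {x}) \<le> Suc 0"
    using cL x k_ge_3 maximal_clique_finite[OF Lmax] by simp
  then obtain p1 p2 where p: "p1 \<in> L" "p2 \<in> L" "p1 \<noteq> x" "p2 \<noteq> x" "p1 \<noteq> p2"
    using card_le_Suc0_iff_eq[of "L - {x}"] maximal_clique_finite[OF Lmax] by blast
  obtain u where u: "E p1 u" "u \<notin> L"
    using neighbour_outside_maximal_clique[OF Lmax p(1)] by blast
  obtain u2 where u2: "E p2 u2" "u2 \<notin> L"
    using neighbour_outside_maximal_clique[OF Lmax p(2)] by blast
  obtain W where W: "maximal_clique V E W" "p2 \<in> W" "u2 \<in> W"
    using edge_extends_maximal_clique[OF u2(1)] by blast
  have WL: "W \<noteq> L"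
    using W(3) u2(2) by blast
  obtain r w where rw: "r \<in> R" "r \<noteq> x" "w \<in> W" "E u r" "E r w" "E u w"
    using outside_neighbour_triangle[OF L x p u W(1,2) WL R] by blast
  obtain r' w' where rw': "r' \<in> R'" "r' \<noteq> x" "w' \<in> W" "E u r'" "E r' w'" "E u w'"
    using outside_neighbour_triangle[OF L x p u W(1,2) WL R'] by blast
  have "\<not> E u p2"
    using maximal_clique_outside_neighbour_unique[OF Lmax u(2) p(1,2)] adj_sym[OF u(1)] p(5) by blast
  then have "u \<notin> W"
    using maximal_clique_adj[OF W(1) _ W(2)] u(2) p(2) by blast
  then have "w' = w"
    using maximal_clique_outside_neighbour_unique[OF W(1) _ rw'(3) rw(3) rw'(6) rw(6)] by blast
  have "r' \<notin> R"
    using maximal_clique_Int_unique[OF R(1) R'(1) RR' _ rw'(1) R(2) R'(2)] rw'(2) by blast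
  then have "\<not> E r r'"
    using maximal_clique_outside_neighbour_unique[OF R(1) _ rw(1) R(2)]
      maximal_clique_adj[OF R'(1) rw'(1) R'(2) rw'(2)] rw(2) by (blast dest: adj_sym)
  moreover have "distinct [u, w, r, r']"
    using adj_neq[OF rw(4)] adj_neq[OF rw(5)] adj_neq[OF rw(6)] adj_neq[OF rw'(4)] adj_neq[OF rw'(5)]
      \<open>w' = w\<close> \<open>r' \<notin> R\<close> rw(1) by auto
  ultimately show False
    using no_diamond[of u w r r'] rw rw'(4) \<open>w' = w\<close> adj_sym[OF rw(5)] adj_sym[OF rw'(5)]
      adj_in_V1[OF rw(4)] adj_in_V2[OF rw(4)] adj_in_V2[OF rw(6)] adj_in_V2[OF rw'(4)] by auto
qed

text \<open>For p in a smallest maximal clique K, this is the unique other maximal clique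
  through p.\<close>
definition branch :: "'a set \<Rightarrow> 'a \<Rightarrow> 'a set" where
  "branch K p = insert p {w. E p w \<and> w \<notin> K}"

lemma branch_self: "p \<in> branch K p"
  by (simp add: branch_def)

lemma branch_branch:
  assumes K: "clique V E K" and p: "p \<in> K"
  shows "branch (branch K p) p = K"
proof (rule set_eqI)
  fix w
  show "w \<in> branch (branch K p) p \<longleftrightarrow> w \<in> K"
  proof (cases "w = p")
    case True
    then show ?thesis
      using p by (simp add: branch_def)
  next
    case False
    have "w \<in> branch (branch K p) p \<longleftrightarrow> E p w \<and> w \<notin> branch K p"
      using False by (simp add: branch_def[of "branch K p"])
    also have "\<dots> \<longleftrightarrow> E p w \<and> w \<in> K"
      using False by (auto simp: branch_def)
    also have "\<dots> \<longleftrightarrow> w \<in> K"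
      using K p False by (auto simp: clique_def)
    finally show ?thesis .
  qed
qed

lemma branch_disjoint:
  assumes K: "maximal_clique V E K" and c: "c \<in> K" "c' \<in> K"
    and v: "v \<in> branch K c" "v \<in> branch K c'"
  shows "c = c'"
  using v maximal_clique_outside_neighbour_unique[OF K _ c] c adj_sym
  unfolding branch_def by blast

lemma branch_min_clique:
  assumes L: "min_clique L" and p: "p \<in> L"
  shows "min_clique (branch L p)" "branch L p \<noteq> L"
proof -
  have Lmax: "maximal_clique V E L"
    using L by (simp add: min_clique_def)
  obtain u where u: "E p u" "u \<notin> L"
    using neighbour_outside_maximal_clique[OF Lmax p] by blast
  obtain Y where Y: "maximal_clique V E Y" "p \<in> Y" "u \<in> Y"
    using edge_extends_maximal_clique[OF u(1)] by blast
  have YL: "Y \<noteq> L"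
    using Y(3) u(2) by blast
  have "Y \<subseteq> branch L p"
  proof
    fix w assume w: "w \<in> Y"
    show "w \<in> branch L p"
    proof (cases "w = p")
      case False
      then have "E p w"
        using maximal_clique_adj[OF Y(1) Y(2) w] by simp
      moreover have "w \<notin> L"
        using maximal_clique_Int_unique[OF Y(1) Lmax YL w _ Y(2) p] False by blast
      ultimately show ?thesis
        unfolding branch_def by blast
    qed (simp add: branch_def)
  qed
  moreover have "branch L p \<subseteq> Y"
  proof
    fix w assume w: "w \<in> branch L p"
    show "w \<in> Y"
    proof (cases "w = p")
      case False
      then have pw: "E p w" "w \<notin> L"
        using w unfolding branch_def by blast+
      obtain Y' where Y': "maximal_clique V E Y'" "p \<in> Y'" "w \<in> Y'"
        using edge_extends_maximal_clique[OF pw(1)] by blast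
      then have "Y' = Y"
        using maximal_clique_through_min_clique_unique[OF L p Y'(1,2) _ Y(1,2) YL] pw(2) by blast
      then show ?thesis
        using Y'(3) by blast
    qed (use Y(2) in blast)
  qed
  ultimately have "Y = branch L p"
    by blast
  then show "min_clique (branch L p)" "branch L p \<noteq> L"
    using card_maximal_clique_through_min_clique[OF L p Y(1,2)] Y(1) YL
    unfolding min_clique_def by auto
qed

lemma min_clique_dominating:
  assumes L: "min_clique L" and v: "v \<in> V"
  shows "v \<in> L \<or> (\<exists>p\<in>L. E v p)"
proof -
  have Lmax: "maximal_clique V E L" and cL: "card L = k"
    using L by (simp_all add: min_clique_def)
  obtain p0 where p0: "p0 \<in> L"
    using cL k_ge_3 by fastforce
  then have "E\<^sup>*\<^sup>* p0 v"
    using connected v maximal_clique_subset[OF Lmax] unfolding connected_graph_def by blast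
  then show ?thesis
  proof (induction rule: rtranclp_induct)
    case base
    then show ?case
      using p0 by blast
  next
    case (step y z)
    show ?case
    proof (cases "y \<in> L")
      case True
      then show ?thesis
        using step(2) adj_sym by blast
    next
      case False
      then obtain p where p: "p \<in> L" "E y p"
        using step(3) by blast
      have Y: "min_clique (branch L p)"
        using branch_min_clique[OF L p(1)] by blast
      have yY: "y \<in> branch L p" and pY: "p \<in> branch L p" and "y \<noteq> p"
        using p False adj_sym unfolding branch_def by auto
      show ?thesis
      proof (cases "z \<in> branch L p")
        case True
        then show ?thesis
          using p(1) adj_sym unfolding branch_def by blast
      next
        case False
        then show ?thesis
          using outside_neighbour_adj_clique_through[OF Y yY pY \<open>y \<noteq> p\<close> step(2) False Lmax p(1)]
          by blast
      qed
    qed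
  qed
qed

text \<open>For a smallest maximal clique K, every vertex is equal or adjacent to exactly one vertex
  of K, its anchor; the fibres of the anchor map are the cliques \<^term>\<open>branch K c\<close>.\<close>
definition anchor :: "'a set \<Rightarrow> 'a \<Rightarrow> 'a" where
  "anchor K v = (if v \<in> K then v else THE p. p \<in> K \<and> E v p)"

lemma anchor_mem_branch:
  assumes K: "min_clique K" and v: "v \<in> V"
  shows "anchor K v \<in> K" "v \<in> branch K (anchor K v)"
proof -
  have "anchor K v \<in> K \<and> v \<in> branch K (anchor K v)"
  proof (cases "v \<in> K")
    case True
    then show ?thesis
      by (simp add: anchor_def branch_def)
  next
    case False
    then obtain p where p: "p \<in> K" "E v p"
      using min_clique_dominating[OF K v] by blast
    moreover have "q = p" if "q \<in> K \<and> E v q" for q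
      using maximal_clique_outside_neighbour_unique[OF _ False] K p that
      unfolding min_clique_def by blast
    ultimately have "(THE q. q \<in> K \<and> E v q) = p"
      by (intro the_equality) blast+
    then have "anchor K v = p"
      using False by (simp add: anchor_def)
    then show ?thesis
      using p False adj_sym unfolding branch_def by auto
  qed
  then show "anchor K v \<in> K" "v \<in> branch K (anchor K v)"
    by blast+
qed

lemma anchor_eq_iff_mem_branch:
  assumes K: "min_clique K" and v: "v \<in> V" and c: "c \<in> K"
  shows "anchor K v = c \<longleftrightarrow> v \<in> branch K c"
  using anchor_mem_branch[OF K v] branch_disjoint[of K "anchor K v" c v] K c
  unfolding min_clique_def by blast

lemma adj_if_anchor_eq:
  assumes K: "min_clique K" and vw: "v \<in> V" "w \<in> V" "v \<noteq> w" and eq: "anchor K v = anchor K w"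
  shows "E v w"
proof -
  have "v \<in> branch K (anchor K v)" "w \<in> branch K (anchor K v)"
    using anchor_mem_branch[OF K] vw eq by metis+
  moreover have "maximal_clique V E (branch K (anchor K v))"
    using branch_min_clique(1)[OF K anchor_mem_branch(1)[OF K vw(1)]] by (simp add: min_clique_def)
  ultimately show ?thesis
    using maximal_clique_adj vw(3) by blast
qed

context
  fixes K p
  assumes K: "min_clique K" and p: "p \<in> K"
begin

lemma anchor_branch_of_mem:
  assumes c: "c \<in> K"
  shows "anchor (branch K p) c = p"
proof -
  have "clique V E K"
    using K by (simp add: min_clique_def maximal_clique_def)
  moreover have "c \<in> V"
    using K c maximal_clique_subset unfolding min_clique_def by blast
  ultimately show ?thesis
    using anchor_eq_iff_mem_branch[OF branch_min_clique(1)[OF K p] _ branch_self] branch_branch p c by blast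
qed

lemma anchor_branch_eq_if_adj:
  assumes v: "v \<in> V" and w: "w \<in> V" and vw: "E v w" and ne: "anchor K v \<noteq> anchor K w"
  shows "anchor (branch K p) v = anchor (branch K p) w"
proof -
  let ?Y = "branch K p" and ?\<rho> = "anchor (branch K p) v"
  have \<rho>: "?\<rho> \<in> ?Y" "v \<in> branch ?Y ?\<rho>"
    using anchor_mem_branch[OF branch_min_clique(1)[OF K p] v] by blast+
  have "w \<in> branch ?Y ?\<rho>"
  proof (cases "v \<in> ?Y")
    case True
    then have "?\<rho> = v"
      by (simp add: anchor_def)
    moreover have "w \<notin> ?Y"
      using True ne anchor_eq_iff_mem_branch[OF K _ p] v w by blast
    ultimately show ?thesis
      using vw unfolding branch_def[of ?Y] by simp
  next
    case False
    let ?c = "anchor K v"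
    let ?C = "branch K ?c"
    have c: "?c \<in> K" "v \<in> ?C"
      using anchor_mem_branch[OF K v] by blast+
    have C: "min_clique ?C"
      using branch_min_clique(1)[OF K c(1)] .
    have "?\<rho> \<noteq> v"
      using \<rho>(1) False by auto
    then have "E ?\<rho> v"
      using \<rho>(2) unfolding branch_def[of ?Y] by auto
    have "?c \<noteq> p"
      using False anchor_eq_iff_mem_branch[OF K v p] by blast
    moreover have "anchor K ?\<rho> = p"
      using anchor_eq_iff_mem_branch[OF K adj_in_V1[OF \<open>E ?\<rho> v\<close>] p] \<rho>(1) by simp
    ultimately have "?\<rho> \<notin> ?C"
      using anchor_eq_iff_mem_branch[OF K adj_in_V1[OF \<open>E ?\<rho> v\<close>] c(1)] by simp
    moreover have "w \<notin> ?C"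
      using anchor_eq_iff_mem_branch[OF K w c(1)] ne by simp
    ultimately have "?\<rho> \<in> branch ?C v" "w \<in> branch ?C v"
      using \<open>E ?\<rho> v\<close> vw adj_sym unfolding branch_def by blast+
    then have "?\<rho> = w \<or> E ?\<rho> w"
      using maximal_clique_adj branch_min_clique(1)[OF C c(2)] unfolding min_clique_def by blast
    moreover have "?\<rho> = w" if "w \<in> ?Y" "E ?\<rho> w"
      using maximal_clique_outside_neighbour_unique[of ?Y v w ?\<rho>] branch_min_clique(1)[OF K p] False that(1)
        \<rho>(1) vw adj_sym[OF \<open>E ?\<rho> v\<close>] unfolding min_clique_def by blast
    ultimately show ?thesis
      unfolding branch_def[of ?Y] by blast
  qed
  then show ?thesis
    using anchor_eq_iff_mem_branch[OF branch_min_clique(1)[OF K p] w \<rho>(1)] by simp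
qed

lemma anchor_pair_inj:
  assumes v: "v \<in> V" and w: "w \<in> V"
    and eq: "anchor K v = anchor K w" "anchor (branch K p) v = anchor (branch K p) w"
  shows "v = w"
proof -
  let ?Y = "branch K p" and ?c = "anchor K v" and ?\<rho> = "anchor (branch K p) v"
  have c: "?c \<in> K" "v \<in> branch K ?c" "w \<in> branch K ?c"
    using anchor_mem_branch[OF K] v w eq(1) by metis+
  have \<rho>: "?\<rho> \<in> ?Y" "v \<in> branch ?Y ?\<rho>" "w \<in> branch ?Y ?\<rho>"
    using anchor_mem_branch[OF branch_min_clique(1)[OF K p]] v w eq(2) by metis+
  have "branch K ?c \<noteq> branch ?Y ?\<rho>"
  proof
    assume same: "branch K ?c = branch ?Y ?\<rho>"
    have "?c \<in> V"
      using K c(1) maximal_clique_subset unfolding min_clique_def by blast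
    then have "?\<rho> = p"
      using anchor_eq_iff_mem_branch[OF branch_min_clique(1)[OF K p] _ \<rho>(1)] anchor_branch_of_mem[OF c(1)]
        same branch_self[of ?c] by metis
    then have "branch K ?c = K"
      using same branch_branch[of K p] K p unfolding min_clique_def maximal_clique_def by simp
    then show False
      using branch_min_clique(2)[OF K c(1)] by simp
  qed
  then show ?thesis
    using maximal_clique_Int_unique branch_min_clique(1)[OF K c(1)]
      branch_min_clique(1)[OF branch_min_clique(1)[OF K p] \<rho>(1)] c(2,3) \<rho>(2,3)
    unfolding min_clique_def by blast
qed

lemma anchor_pair_surj:
  assumes c: "c \<in> K" and \<rho>: "\<rho> \<in> branch K p"
  shows "\<exists>v\<in>V. anchor K v = c \<and> anchor (branch K p) v = \<rho>"
proof -
  have KV: "K \<subseteq> V"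
    using K maximal_clique_subset unfolding min_clique_def by blast
  show ?thesis
  proof (cases "\<rho> = p")
    case True
    have "anchor K c = c"
      using c by (simp add: anchor_def)
    then show ?thesis
      using True c KV anchor_branch_of_mem[OF c] by blast
  next
    case \<rho>p: False
    then have p\<rho>: "E p \<rho>" "\<rho> \<notin> K"
      using \<rho> unfolding branch_def by blast+
    show ?thesis
    proof (cases "c = p")
      case True
      have "anchor (branch K p) \<rho> = \<rho>"
        using \<rho> by (simp add: anchor_def)
      then show ?thesis
        using True \<rho> anchor_eq_iff_mem_branch[OF K _ p] adj_in_V2[OF p\<rho>(1)] by blast
    next
      case False
      have C: "maximal_clique V E (branch K c)"
        using branch_min_clique(1)[OF K c] by (simp add: min_clique_def)
      obtain w where w: "w \<in> branch K c" "w \<noteq> c" "E \<rho> w"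
        using outside_neighbour_adj_clique_through[OF K p c False[symmetric] p\<rho> C]
        by (auto simp: branch_def)
      have wV: "w \<in> V"
        using adj_in_V2[OF w(3)] .
      then have "anchor K w = c"
        using anchor_eq_iff_mem_branch[OF K _ c] w(1) by blast
      then have "w \<notin> branch K p"
        using anchor_eq_iff_mem_branch[OF K wV p] False by blast
      then have "anchor (branch K p) w = \<rho>"
        using anchor_eq_iff_mem_branch[OF branch_min_clique(1)[OF K p] wV \<rho>] w(3) unfolding branch_def by blast
      then show ?thesis
        using wV \<open>anchor K w = c\<close> by blast
    qed
  qed
qed

end

lemma rook_graph_iso_if_min_clique:
  assumes K: "min_clique K"
  shows "graph_iso V E (line_V (Kmn_V k k) (Kmn_E k k)) (line_E (Kmn_V k k) (Kmn_E k k))"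
proof -
  obtain p where p: "p \<in> K"
    using K k_ge_3 unfolding min_clique_def by fastforce
  let ?Y = "branch K p"
  have fin: "finite K" "finite ?Y" and card: "card K = k" "card ?Y = k"
    using K branch_min_clique(1)[OF K p] maximal_clique_finite unfolding min_clique_def by auto
  obtain g where g: "bij_betw g {..<k} K"
    using ex_bij_betw_nat_finite[OF fin(1)] card(1) atLeast0LessThan by auto
  obtain h where h: "bij_betw h {..<k} ?Y"
    using ex_bij_betw_nat_finite[OF fin(2)] card(2) atLeast0LessThan by auto
  have "E v w \<longleftrightarrow> v \<noteq> w \<and> (anchor K v = anchor K w \<or> anchor ?Y v = anchor ?Y w)"
    if "v \<in> V" "w \<in> V" for v w
    using that adj_neq anchor_branch_eq_if_adj[OF K p] adj_if_anchor_eq[OF K]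
      adj_if_anchor_eq[OF branch_min_clique(1)[OF K p]] by blast
  then show ?thesis
    using graph_iso_rook_if_coordinates[OF g h, of "anchor K" "anchor ?Y"]
      anchor_mem_branch(1)[OF K] anchor_mem_branch(1)[OF branch_min_clique(1)[OF K p]]
      anchor_pair_inj[OF K p] anchor_pair_surj[OF K p] by blast
qed

end

context nonsimplicial_CIS_graph
begin

lemma complete_bipartite_or_rook:
  "(\<exists>m n. 2 \<le> m \<and> 2 \<le> n \<and> graph_iso V E (Kmn_V m n) (Kmn_E m n))
   \<or> (\<exists>n. 3 \<le> n \<and> graph_iso V E (line_V (Kmn_V n n) (Kmn_E n n)) (line_E (Kmn_V n n) (Kmn_E n n)))"
proof -
  obtain v where "v \<in> V"
    using V_nonempty by blast
  then obtain K0 where "maximal_clique V E K0"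
    using clique_extends_maximal[OF clique_singleton] by blast
  then obtain L where L: "maximal_clique V E L" "\<And>K. maximal_clique V E K \<Longrightarrow> card L \<le> card K"
    using ex_has_least_nat[of "maximal_clique V E" K0 card] by blast
  show ?thesis
  proof (cases "card L = 2")
    case True
    then obtain x y where "L = {x, y}" "x \<noteq> y"
      by (auto simp: card_2_iff)
    then show ?thesis
      using complete_bipartite_if_edge_clique L(1) by blast
  next
    case False
    then have k: "3 \<le> card L"
      using card_maximal_clique_ge_2[OF L(1)] by linarith
    then interpret min_clique_CIS_graph V E "card L"
      using L(2) by unfold_locales
    have "min_clique L"
      using L(1) by (simp add: min_clique_def)
    then show ?thesis
      using rook_graph_iso_if_min_clique k by blast
  qed
qed

end

theorem theorem1:
  fixes V :: "'a set" and E :: "'a \<Rightarrow> 'a \<Rightarrow> bool"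
  assumes "graph V E" and "connected_graph V E" and "diamond_free V E"
  shows "CIS V E \<longleftrightarrow>
           (clique_simplicial V E
            \<or> (\<exists>m n. m \<ge> 2 \<and> n \<ge> 2 \<and> graph_iso V E (Kmn_V m n) (Kmn_E m n))
            \<or> (\<exists>n. n \<ge> 3 \<and> graph_iso V E (line_V (Kmn_V n n) (Kmn_E n n)) (line_E (Kmn_V n n) (Kmn_E n n))))"
proof
  interpret simple_graph V E
    using assms(1) by unfold_locales
  assume "CIS V E"
  then interpret diamond_free_CIS_graph V E
    using assms(1,3) by unfold_locales
  show "clique_simplicial V E
            \<or> (\<exists>m n. m \<ge> 2 \<and> n \<ge> 2 \<and> graph_iso V E (Kmn_V m n) (Kmn_E m n))
            \<or> (\<exists>n. n \<ge> 3 \<and> graph_iso V E (line_V (Kmn_V n n) (Kmn_E n n)) (line_E (Kmn_V n n) (Kmn_E n n)))"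
  proof (cases "clique_simplicial V E")
    case False
    then obtain K where "maximal_clique V E K" "\<forall>w\<in>K. \<not> simplicial_vertex V E w"
      by (rule nonsimplicial_clique_if_not_clique_simplicial)
    then have "\<forall>v\<in>V. \<not> simplicial_vertex V E v"
      using no_simplicial_vertex_if_nonsimplicial_clique assms(2) by blast
    then interpret nonsimplicial_CIS_graph V E
      using assms(2) by unfold_locales
    show ?thesis
      using complete_bipartite_or_rook by blast
  qed blast
next
  interpret simple_graph V E
    using assms(1) by unfold_locales
  have "V \<noteq> {}"
    using assms(2) by (simp add: connected_graph_def)
  then show "clique_simplicial V E
            \<or> (\<exists>m n. m \<ge> 2 \<and> n \<ge> 2 \<and> graph_iso V E (Kmn_V m n) (Kmn_E m n))
            \<or> (\<exists>n. n \<ge> 3 \<and> graph_iso V E (line_V (Kmn_V n n) (Kmn_E n n)) (line_E (Kmn_V n n) (Kmn_E n n)))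
        \<Longrightarrow> CIS V E"
    using clique_simplicial_imp_CIS graph_iso_Kmn_CIS graph_iso_rook_CIS by blast
qed

end
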